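(* Let $c_0>0$. There is a constant $C>0$ depending only on $c_0$ such that the following holds. Let $N\geq 10$ be an integer and let $\{a_n\}_{n=1}^N$ be a uniformly convex sequence (with parameter $N$) satisfying $|\{a_n\}_{n=1}^N\cap N^{-1}\mathbb{Z}|\geq c_0N^{2/3}$. Define $v_n=(\frac{n}{N}-\frac{a_n}{N},\,a_n)\in\mathbb{R}^2$ for $1\le n\le N$. Then there exists a complex sequence $\{b_n\}_{n=1}^N$ such that \[ \left\| \sup_{x\in [0,N^2]} \left|\sum_{n=1}^N b_n e((x,t)\cdot v_n) \right| \right\|_{L^4([0,N^2])} \geq C N^{\frac56}\Big(\sum_{n=1}^N|b_n|^2\Big)^{1/2}, \] where the $L^4([0,N^2])$ norm is in the variable $t$.
   Context: $e(x):=e^{2\pi i x}$ and $\cdot$ is the Euclidean inner product on $\mathbb{R}^2$. A real sequence $\{a_n\}_{n=1}^N$ is called uniformly convex (with parameter $N$) if for all admissible $n$: $a_{n+1}-a_n\in[\frac{1}{4N},\frac{4}{N}]$ and $(a_{n+2}-a_{n+1})-(a_{n+1}-a_n)\in[\frac{1}{4N^2},\frac{4}{N^2}]$. $|\cdot|$ of a set denotes cardinality. *)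

theory Defs
  imports "HOL-Analysis.Analysis"
begin

definition e :: "real \<Rightarrow> complex" where
  "e x = exp (2 * of_real pi * \<i> * of_real x)"

definition uniformly_convex :: "nat \<Rightarrow> (nat \<Rightarrow> real) \<Rightarrow> bool" where
  "uniformly_convex N a \<longleftrightarrow>
     (\<forall>n. 1 \<le> n \<and> n + 1 \<le> N \<longrightarrow>
        a (n+1) - a n \<in> {1 / (4 * real N) .. 4 / real N}) \<and>
     (\<forall>n. 1 \<le> n \<and> n + 2 \<le> N \<longrightarrow>
        (a (n+2) - a (n+1)) - (a (n+1) - a n) \<in> {1 / (4 * real N ^ 2) .. 4 / real N ^ 2})"

definition vec_v :: "nat \<Rightarrow> (nat \<Rightarrow> real) \<Rightarrow> nat \<Rightarrow> real \<times> real" where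
  "vec_v N a n = (real n / real N - a n / real N, a n)"

end

theory Submission
  imports Defs
begin

(* Let b be the indicator of the K indices n with a_n in N^-1 Z. For t = m + s with m < N^2 and
   0 <= s <= 1/40, take x = N (m mod N) in [0, N^2]: on those indices (x, t) . v_n = s a_n modulo 1,
   and since a_n - a_1 lies in [0, 4] the K phases s (a_n - a_1) stay within 1/10, so the
   exponential sum has modulus at least K/2. Thus the maximal function is at least K/2 on a set of
   measure N^2/40, its L^4 norm is >~ N^(1/2) K, and K >= c0 N^(2/3) turns this into
   sqrt c0 N^(5/6) sqrt K. *)

lemma e_conv_cis: "e x = cis (2 * pi * x)"
  unfolding e_def cis_conv_exp by (simp add: mult_ac)

lemma e_add: "e (x + y) = e x * e y"
  unfolding e_conv_cis by (simp add: cis_mult distrib_left)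

lemma e_of_int [simp]: "e (of_int k) = 1"
  unfolding e_conv_cis by simp

lemma norm_e [simp]: "norm (e x) = 1"
  unfolding e_conv_cis by simp

lemma Re_e: "Re (e x) = cos (2 * pi * x)"
  unfolding e_conv_cis by simp

lemma norm_sum_e_ge_half_card:
  assumes small: "\<And>n. n \<in> S \<Longrightarrow> \<bar>\<theta> n\<bar> \<le> 1/6"
  shows "real (card S) / 2 \<le> norm (\<Sum>n\<in>S. e (\<theta> n))"
proof -
  have "real (card S) / 2 = (\<Sum>n\<in>S. 1/2)"
    by simp
  also have "\<dots> \<le> (\<Sum>n\<in>S. Re (e (\<theta> n)))"
  proof (rule sum_mono)
    fix n assume "n \<in> S"
    then have "\<bar>2 * pi * \<theta> n\<bar> \<le> pi / 3"
      using small[of n] pi_gt_zero by (simp add: abs_mult)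
    then have "cos (pi / 3) \<le> cos \<bar>2 * pi * \<theta> n\<bar>"
      by (intro cos_monotone_0_pi_le) auto
    then show "1/2 \<le> Re (e (\<theta> n))"
      by (simp add: Re_e cos_60)
  qed
  also have "\<dots> = Re (\<Sum>n\<in>S. e (\<theta> n))"
    by simp
  also have "\<dots> \<le> norm (\<Sum>n\<in>S. e (\<theta> n))"
    by (rule complex_Re_le_cmod)
  finally show ?thesis .
qed

lemma uniformly_convex_bounds_from_first:
  assumes uc: "uniformly_convex N a" and n: "1 \<le> n" "n \<le> N"
  shows "a 1 \<le> a n \<and> a n \<le> a 1 + 4 * (real n - 1) / real N"
  using n(1)
proof (induction n rule: dec_induct)
  case base
  then show ?case by simp
next
  case (step k)
  then have "a (k + 1) - a k \<in> {1 / (4 * real N) .. 4 / real N}"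
    using uc n(2) unfolding uniformly_convex_def by auto
  moreover have "0 \<le> 1 / (4 * real N)"
    by simp
  moreover have "4 * (real k - 1) / real N + 4 / real N = 4 * (real (Suc k) - 1) / real N"
    by (simp add: add_divide_distrib[symmetric] algebra_simps)
  ultimately show ?case
    using step.IH by auto
qed

lemma uniformly_convex_abs_diff_first_le:
  assumes "uniformly_convex N a" "1 \<le> n" "n \<le> N"
  shows "\<bar>a n - a 1\<bar> \<le> 4"
proof -
  have "4 * (real n - 1) / real N \<le> 4"
    using assms(2,3) by (simp add: divide_le_eq)
  then show ?thesis
    using uniformly_convex_bounds_from_first[OF assms] by linarith
qed

definition grid_indices :: "nat \<Rightarrow> (nat \<Rightarrow> real) \<Rightarrow> nat set" where
  "grid_indices N a = {n \<in> {1..N}. \<exists>k::int. a n = of_int k / real N}"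

lemma card_grid_values_le_card_grid_indices:
  "card (a ` {1..N} \<inter> {x. \<exists>k::int. x = of_int k / real N}) \<le> card (grid_indices N a)"
proof -
  have "a ` {1..N} \<inter> {x. \<exists>k::int. x = of_int k / real N} = a ` grid_indices N a"
    unfolding grid_indices_def by auto
  then show ?thesis
    by (simp add: card_image_le grid_indices_def)
qed

lemma e_inner_vec_v_grid:
  assumes "0 < N" and "a n = of_int k / real N"
  shows "e ((real N * real r, real N * real q + real r + s) \<bullet> vec_v N a n) = e (s * a n)"
proof -
  have "(real N * real r, real N * real q + real r + s) \<bullet> vec_v N a n
      = of_int (int r * int n + int q * k) + s * a n"
    using assms by (simp add: vec_v_def field_simps)
  then show ?thesis
    by (simp only: e_add e_of_int mult_1_left)
qed

lemma norm_sum_e_grid_ge_half_card: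
  assumes uc: "uniformly_convex N a" and N: "0 < N" and S: "S \<subseteq> grid_indices N a"
    and t: "real m \<le> t" "t \<le> real m + 1/40"
  shows "real (card S) / 2 \<le> norm (\<Sum>n\<in>S. e ((real N * real (m mod N), t) \<bullet> vec_v N a n))"
proof -
  define s where "s = t - real m"
  have t_eq: "t = real N * real (m div N) + real (m mod N) + s"
    unfolding s_def by (simp flip: of_nat_mult of_nat_add)
  have "e ((real N * real (m mod N), t) \<bullet> vec_v N a n) = e (s * (a n - a 1)) * e (s * a 1)"
    if n: "n \<in> S" for n
  proof -
    obtain k :: int where "a n = of_int k / real N"
      using S n unfolding grid_indices_def by blast
    then have "e ((real N * real (m mod N), t) \<bullet> vec_v N a n) = e (s * a n)"
      unfolding t_eq by (rule e_inner_vec_v_grid[OF N])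
    also have "s * a n = s * (a n - a 1) + s * a 1"
      by algebra
    finally show ?thesis
      by (simp only: e_add)
  qed
  then have "norm (\<Sum>n\<in>S. e ((real N * real (m mod N), t) \<bullet> vec_v N a n))
      = norm (\<Sum>n\<in>S. e (s * (a n - a 1)))"
    by (simp add: sum_distrib_right[symmetric] norm_mult)
  moreover have "\<bar>s * (a n - a 1)\<bar> \<le> 1/6" if "n \<in> S" for n
  proof -
    have "\<bar>a n - a 1\<bar> \<le> 4"
      using S that uniformly_convex_abs_diff_first_le[OF uc] unfolding grid_indices_def by auto
    moreover have "0 \<le> s" "s \<le> 1/40"
      using t unfolding s_def by auto
    ultimately have "\<bar>s\<bar> * \<bar>a n - a 1\<bar> \<le> 1/40 * 4"
      by (intro mult_mono) auto
    then show ?thesis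
      by (simp add: abs_mult)
  qed
  ultimately show ?thesis
    using norm_sum_e_ge_half_card by metis
qed

lemma bdd_above_section_image:
  fixes F :: "'a::metric_space \<Rightarrow> 'b::metric_space \<Rightarrow> real"
  assumes F: "continuous_on (X \<times> T) (\<lambda>(x, t). F x t)" and X: "compact X" and t: "t \<in> T"
  shows "bdd_above ((\<lambda>x. F x t) ` X)"
proof -
  have "continuous_on X (\<lambda>x. F x t)"
    using continuous_on_compose2[OF F continuous_on_Pair[OF continuous_on_id continuous_on_const]] t
    by auto
  then show ?thesis
    using X by (meson bounded_imp_bdd_above compact_continuous_image compact_imp_bounded)
qed

lemma continuous_on_Sup_section_image:
  fixes F :: "'a::metric_space \<Rightarrow> 'b::metric_space \<Rightarrow> real"
  assumes F: "continuous_on (X \<times> T) (\<lambda>(x, t). F x t)"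
    and X: "compact X" "X \<noteq> {}" and T: "compact T"
  shows "continuous_on T (\<lambda>t. Sup ((\<lambda>x. F x t) ` X))"
  unfolding continuous_on_iff
proof (intro ballI allI impI)
  fix t0 and \<epsilon> :: real
  assume t0: "t0 \<in> T" and \<epsilon>: "0 < \<epsilon>"
  have "uniformly_continuous_on (X \<times> T) (\<lambda>(x, t). F x t)"
    using compact_uniformly_continuous[OF F] X T compact_Times by blast
  then obtain d where d: "0 < d"
    and close: "\<And>p p'. p \<in> X \<times> T \<Longrightarrow> p' \<in> X \<times> T \<Longrightarrow> dist p' p < d \<Longrightarrow>
        dist ((\<lambda>(x, t). F x t) p') ((\<lambda>(x, t). F x t) p) < \<epsilon>/2"
    using \<epsilon> unfolding uniformly_continuous_on_def by (meson half_gt_zero)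
  have "dist (Sup ((\<lambda>x. F x t) ` X)) (Sup ((\<lambda>x. F x t0) ` X)) < \<epsilon>"
    if t: "t \<in> T" "dist t t0 < d" for t
  proof -
    have sup_le: "Sup ((\<lambda>x. F x u) ` X) \<le> Sup ((\<lambda>x. F x v) ` X) + \<epsilon>/2"
      if v: "v \<in> T" and uv: "\<And>x. x \<in> X \<Longrightarrow> F x u \<le> F x v + \<epsilon>/2" for u v
    proof (rule cSUP_least[OF X(2)])
      fix x assume x: "x \<in> X"
      have "F x v \<le> Sup ((\<lambda>x. F x v) ` X)"
        by (rule cSUP_upper[OF x bdd_above_section_image[OF F X(1) v]])
      then show "F x u \<le> Sup ((\<lambda>x. F x v) ` X) + \<epsilon>/2"
        using uv[OF x] by linarith
    qed
    have diff: "F x t \<le> F x t0 + \<epsilon>/2 \<and> F x t0 \<le> F x t + \<epsilon>/2" if "x \<in> X" for x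
    proof -
      have "dist (F x t) (F x t0) < \<epsilon>/2"
        using close[of "(x, t0)" "(x, t)"] that t t0 by (simp add: dist_Pair_Pair)
      then show ?thesis
        unfolding dist_real_def by linarith
    qed
    then have "Sup ((\<lambda>x. F x t) ` X) \<le> Sup ((\<lambda>x. F x t0) ` X) + \<epsilon>/2"
      and "Sup ((\<lambda>x. F x t0) ` X) \<le> Sup ((\<lambda>x. F x t) ` X) + \<epsilon>/2"
      using t(1) t0 diff by (auto intro!: sup_le)
    then show ?thesis
      using \<epsilon> by (simp add: dist_real_def abs_le_iff)
  qed
  then show "\<exists>d>0. \<forall>t\<in>T. dist t t0 < d \<longrightarrow>
      dist (Sup ((\<lambda>x. F x t) ` X)) (Sup ((\<lambda>x. F x t0) ` X)) < \<epsilon>"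
    using d by blast
qed

lemma set_integral_ge_disjoint_family:
  fixes f :: "'a \<Rightarrow> real"
  assumes P: "finite P" "disjoint_family_on I P"
    and I: "\<And>i. i \<in> P \<Longrightarrow> I i \<in> sets M" "\<And>i. i \<in> P \<Longrightarrow> emeasure M (I i) < \<infinity>"
      "\<And>i. i \<in> P \<Longrightarrow> I i \<subseteq> A"
    and f: "set_integrable M A f" "\<And>x. x \<in> A \<Longrightarrow> 0 \<le> f x"
      "\<And>i x. i \<in> P \<Longrightarrow> x \<in> I i \<Longrightarrow> c \<le> f x"
  shows "c * (\<Sum>i\<in>P. measure M (I i)) \<le> (LINT x:A|M. f x)"
proof -
  define h where "h x = (\<Sum>i\<in>P. c * indicator (I i) x)" for x
  have "h x \<le> indicator A x * f x" for x
  proof (cases "\<exists>i\<in>P. x \<in> I i")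
    case True
    then obtain i where i: "i \<in> P" "x \<in> I i"
      by blast
    have "h x = c"
      unfolding h_def by (rule sum_indicator_disjoint_family[where f = "\<lambda>_. c", OF P(2) i(2) P(1) i(1)])
    moreover have "x \<in> A"
      using i I(3) by blast
    ultimately show ?thesis
      using f(3)[OF i] by simp
  next
    case False
    then show ?thesis
      using f(2) unfolding h_def by (simp add: indicator_def)
  qed
  moreover have "integrable M h"
    unfolding h_def using I by (intro Bochner_Integration.integrable_sum integrable_mult_right) auto
  ultimately have "integral\<^sup>L M h \<le> (LINT x:A|M. f x)"
    using f(1) unfolding set_lebesgue_integral_def set_integrable_def
    by (intro integral_mono) auto
  moreover have "integral\<^sup>L M h = c * (\<Sum>i\<in>P. measure M (I i))"
    unfolding h_def using I by (simp add: sum_distrib_left)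
  ultimately show ?thesis
    by simp
qed

lemma powr_quarter_lower_bound:
  fixes c0 K n I :: real
  assumes c0: "0 < c0" and n: "1 \<le> n" and K: "c0 * n powr (2/3) \<le> K"
    and I: "n\<^sup>2 * (K/2) ^ 4 / 40 \<le> I"
  shows "sqrt c0 / 6 * n powr (5/6) * sqrt K \<le> I powr (1/4)"
proof -
  define P where "P = n powr (2/3)"
  define B where "B = sqrt c0 / 6 * n powr (5/6) * sqrt K"
  have "0 < P"
    using n by (simp add: P_def)
  then have "0 \<le> K"
    using K c0 unfolding P_def[symmetric] by (meson less_eq_real_def mult_pos_pos order_trans)
  have "(n powr (5/6)) ^ 4 = n powr (2 + 2/3 + 2/3)"
    using n by (simp add: powr_power)
  also have "\<dots> = n\<^sup>2 * P\<^sup>2"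
    using n unfolding P_def powr_add by (simp add: power2_eq_square)
  finally have "(n powr (5/6)) ^ 4 = n\<^sup>2 * P\<^sup>2" .
  moreover have sqrt_pow4: "sqrt x ^ 4 = x\<^sup>2" if "0 \<le> x" for x :: real
  proof -
    have "sqrt x ^ 4 = (sqrt x ^ 2) ^ 2"
      by (simp flip: power_mult)
    then show ?thesis
      using that by simp
  qed
  ultimately have "B ^ 4 = (c0 * P)\<^sup>2 * n\<^sup>2 * K\<^sup>2 / 1296"
    using c0 \<open>0 \<le> K\<close> unfolding B_def by (simp add: power_mult_distrib power_divide)
  also have "\<dots> \<le> K\<^sup>2 * n\<^sup>2 * K\<^sup>2 / 1296"
    using K c0 \<open>0 < P\<close> unfolding P_def[symmetric]
    by (intro divide_right_mono mult_right_mono power_mono) auto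
  also have "\<dots> \<le> n\<^sup>2 * (K/2) ^ 4 / 40"
    by (simp add: power_divide field_simps)
  also have "\<dots> \<le> I"
    by (rule I)
  finally have "B ^ 4 \<le> I" .
  have "0 \<le> B"
    using c0 \<open>0 \<le> K\<close> unfolding B_def by simp
  then have "B = (B powr 4) powr (1/4)"
    unfolding powr_powr by simp
  also have "\<dots> = (B ^ 4) powr (1/4)"
    using \<open>0 \<le> B\<close> by simp
  also have "\<dots> \<le> I powr (1/4)"
    using \<open>B ^ 4 \<le> I\<close> by (intro powr_mono2) auto
  finally show ?thesis
    unfolding B_def .
qed

lemma lint_sup_norm_sum_grid_ge:
  assumes uc: "uniformly_convex N a" and N: "0 < N" and S: "S \<subseteq> grid_indices N a"
  shows "real N ^ 2 * (real (card S) / 2) ^ 4 / 40 \<le>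
    (LINT t:{0..real N ^ 2}|lborel.
      (Sup ((\<lambda>x. norm (\<Sum>n\<in>S. e ((x, t) \<bullet> vec_v N a n))) ` {0..real N ^ 2})) ^ 4)"
proof -
  define A where "A = {0..real N ^ 2}"
  define F where "F x t = norm (\<Sum>n\<in>S. e ((x, t) \<bullet> vec_v N a n))" for x t
  define g where "g t = Sup ((\<lambda>x. F x t) ` A)" for t
  define I where "I m = {real m .. real m + 1/40}" for m :: nat
  have F_cont: "continuous_on (A \<times> A) (\<lambda>(x, t). F x t)"
    unfolding F_def e_def case_prod_unfold by (intro continuous_intros)
  have F_le_g: "F x t \<le> g t" if "x \<in> A" "t \<in> A" for x t
    unfolding g_def using that by (intro cSUP_upper bdd_above_section_image[OF F_cont]) (auto simp: A_def)
  have I_subset_A: "I m \<subseteq> A" if "m < N^2" for m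
  proof -
    have "real m + 1 \<le> real N ^ 2"
      using that by (simp flip: of_nat_power)
    then show ?thesis
      unfolding A_def I_def by auto
  qed
  have "set_integrable lborel A (\<lambda>t. g t ^ 4)"
    unfolding set_integrable_def g_def A_def
    using F_cont[unfolded A_def]
    by (intro borel_integrable_compact continuous_intros continuous_on_Sup_section_image) auto
  moreover have "0 \<le> g t ^ 4" if "t \<in> A" for t
    using F_le_g[of 0 t] that unfolding F_def A_def by (simp add: order_trans[OF norm_ge_zero])
  moreover have "(real (card S) / 2) ^ 4 \<le> g t ^ 4" if "m \<in> {..<N^2}" "t \<in> I m" for m t
  proof -
    have "real N * real (m mod N) \<le> real N * real N"
      using N by (simp add: less_imp_le)
    then have "real N * real (m mod N) \<in> A"
      unfolding A_def by (simp add: power2_eq_square)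
    moreover have "t \<in> A"
      using that I_subset_A by auto
    ultimately have "F (real N * real (m mod N)) t \<le> g t"
      by (rule F_le_g)
    moreover have "real (card S) / 2 \<le> F (real N * real (m mod N)) t"
      unfolding F_def using that(2) unfolding I_def
      by (intro norm_sum_e_grid_ge_half_card[OF uc N S]) auto
    ultimately show ?thesis
      by (intro power_mono) auto
  qed
  moreover have disjoint: "disjoint_family_on I {..<N^2}"
    unfolding disjoint_family_on_def I_def by auto
  ultimately have "(real (card S) / 2) ^ 4 * (\<Sum>m<N^2. measure lborel (I m)) \<le> (LINT t:A|lborel. g t ^ 4)"
    using I_subset_A by (intro set_integral_ge_disjoint_family[OF _ disjoint]) (auto simp: I_def)
  then show ?thesis
    unfolding I_def A_def g_def F_def by (simp add: mult_ac)
qed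

lemma indicator_grid_indices_maximal_L4_ge:
  fixes c0 :: real
  assumes c0: "0 < c0" and N: "0 < N" and uc: "uniformly_convex N a"
    and card: "c0 * real N powr (2/3) \<le> real (card (a ` {1..N} \<inter> {x. \<exists>k::int. x = of_int k / real N}))"
  defines "b \<equiv> indicator (grid_indices N a) :: nat \<Rightarrow> complex"
  shows "(\<exists>n\<in>{1..N}. b n \<noteq> 0) \<and>
    sqrt c0 / 6 * real N powr (5/6) * sqrt (\<Sum>n=1..N. (norm (b n))\<^sup>2) \<le>
    (LINT t:{0..real N ^ 2}|lborel.
      (Sup ((\<lambda>x. norm (\<Sum>n=1..N. b n * e ((x, t) \<bullet> vec_v N a n))) ` {0..real N ^ 2})) ^ 4)
      powr (1/4)"
proof -
  define S where "S = grid_indices N a"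
  have S_sub: "S \<subseteq> {1..N}"
    unfolding S_def grid_indices_def by auto
  have K: "c0 * real N powr (2/3) \<le> real (card S)"
    using card card_grid_values_le_card_grid_indices[of a N] unfolding S_def by linarith
  moreover have "0 < c0 * real N powr (2/3)"
    using c0 N by simp
  ultimately have "S \<noteq> {}"
    by auto
  then have "\<exists>n\<in>{1..N}. b n \<noteq> 0"
    using S_sub unfolding b_def S_def by (fastforce simp: indicator_def)
  moreover have "(\<Sum>n=1..N. b n * e ((x, t) \<bullet> vec_v N a n)) = (\<Sum>n\<in>S. e ((x, t) \<bullet> vec_v N a n))" for x t
    using S_sub unfolding b_def S_def by (simp add: indicator_def sum.If_cases Int_absorb1)
  moreover have "(\<Sum>n=1..N. (norm (b n))\<^sup>2) = real (card S)"
  proof -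
    have "(norm (b n))\<^sup>2 = of_bool (n \<in> S)" for n
      by (simp add: b_def S_def)
    then show ?thesis
      using S_sub by (simp add: Int_absorb1)
  qed
  moreover have "real N ^ 2 * (real (card S) / 2) ^ 4 / 40 \<le>
    (LINT t:{0..real N ^ 2}|lborel.
      (Sup ((\<lambda>x. norm (\<Sum>n\<in>S. e ((x, t) \<bullet> vec_v N a n))) ` {0..real N ^ 2})) ^ 4)"
    using N uc unfolding S_def by (intro lint_sup_norm_sum_grid_ge) auto
  ultimately show ?thesis
    using powr_quarter_lower_bound[OF c0 _ K] N by auto
qed

theorem proposition4:
  fixes c0 :: real
  assumes "c0 > 0"
  shows "\<exists>C>0. \<forall>(N::nat) (a::nat \<Rightarrow> real).
     N \<ge> 10 \<longrightarrow> uniformly_convex N a \<longrightarrow>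
     real (card ((a ` {1..N}) \<inter> {x. \<exists>k::int. x = of_int k / real N})) \<ge> c0 * real N powr (2/3) \<longrightarrow>
     (\<exists>b::nat \<Rightarrow> complex. (\<exists>n\<in>{1..N}. b n \<noteq> 0) \<and>
        (LINT t:{0..real N ^ 2}|lborel.
            (Sup ((\<lambda>x. norm (\<Sum>n=1..N. b n * e ((x, t) \<bullet> vec_v N a n))) ` {0..real N ^ 2})) ^ 4)
          powr (1/4)
        \<ge> C * real N powr (5/6) * sqrt (\<Sum>n=1..N. (norm (b n))\<^sup>2))"
proof (intro exI[of _ "sqrt c0 / 6"] conjI allI impI)
  show "0 < sqrt c0 / 6"
    using assms by simp
qed (rule exI, rule indicator_grid_indices_maximal_L4_ge[OF assms], simp_all)

end
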